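(* Let $R\in(0,\infty)\setminus\{1\}$, $b_1>0$, $b_2>1$, $b_3>0$, and let $m,\ell,F$ be as in the context. For $q\in(0,1]$ and $(1-R)m(q)<(1-R)n<(1-R)\ell(q)$, and for $q>1$ and $(1-R)m(q)<(1-R)n$, we have $\frac{\partial}{\partial n}F(q,n)\le0$.
   Context: Define $m(q)=\frac{R(1-R)}{b_1}q^2-\frac{b_3(1-R)}{b_1}q+1$, $\ell(q)=m(q)+\frac{1-R}{b_1}q(1-q)+\frac{(b_2-1)R(1-R)}{b_1}\frac{q}{(1-R)q+R}$, $\varphi(q,n)=b_1(n-1)+(1-R)(b_3-2R)q+(2-b_2)R(1-R)$, $E(q)^2=4R^2(1-R)^2(b_2-1)(1-q)^2$, $O(q,n)=\frac{(1-R)n}{R(1-q)}-\frac{2(1-R)^2qn/R}{2(1-R)(1-q)[(1-R)q+R]-\varphi(q,n)-\mathrm{sgn}(1-R)\sqrt{\varphi(q,n)^2+E(q)^2}}$. Let $\mathcal{S}=\{q=1\}\cup\{q=\frac{R}{R-1}\}\cup\{n=0\}\cup\{q<1,(1-R)n\ge(1-R)\ell(q)\}$. On $(0,\infty)\times[0,\infty)\setminus\mathcal{S}$ define $F(q,n)=O(q,n)/n$, extended to $(0,\infty)\times[0,\infty)$ where possible by taking limits (in particular at $q=1$, at $q=R/(R-1)$ when $R>1$, and at $n=\ell(q)$ for $q>1$). *)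

theory Defs
  imports "HOL-Analysis.Analysis"
begin

definition mfun :: "real \<Rightarrow> real \<Rightarrow> real \<Rightarrow> real \<Rightarrow> real" where
  "mfun R b1 b3 q = R * (1 - R) / b1 * q^2 - b3 * (1 - R) / b1 * q + 1"

definition lfun :: "real \<Rightarrow> real \<Rightarrow> real \<Rightarrow> real \<Rightarrow> real \<Rightarrow> real" where
  "lfun R b1 b2 b3 q = mfun R b1 b3 q + (1 - R) / b1 * q * (1 - q)
      + (b2 - 1) * R * (1 - R) / b1 * (q / ((1 - R) * q + R))"

definition phifun :: "real \<Rightarrow> real \<Rightarrow> real \<Rightarrow> real \<Rightarrow> real \<Rightarrow> real \<Rightarrow> real" where
  "phifun R b1 b2 b3 q n = b1 * (n - 1) + (1 - R) * (b3 - 2 * R) * q + (2 - b2) * R * (1 - R)"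

definition Esq :: "real \<Rightarrow> real \<Rightarrow> real \<Rightarrow> real" where
  "Esq R b2 q = 4 * R^2 * (1 - R)^2 * (b2 - 1) * (1 - q)^2"

definition Dfun :: "real \<Rightarrow> real \<Rightarrow> real \<Rightarrow> real \<Rightarrow> real \<Rightarrow> real \<Rightarrow> real" where
  "Dfun R b1 b2 b3 q n = 2 * (1 - R) * (1 - q) * ((1 - R) * q + R) - phifun R b1 b2 b3 q n
      - sgn (1 - R) * sqrt ((phifun R b1 b2 b3 q n)^2 + Esq R b2 q)"

definition Ofun :: "real \<Rightarrow> real \<Rightarrow> real \<Rightarrow> real \<Rightarrow> real \<Rightarrow> real \<Rightarrow> real" where
  "Ofun R b1 b2 b3 q n = (1 - R) * n / (R * (1 - q))
      - (2 * (1 - R)^2 * q * n / R) / Dfun R b1 b2 b3 q n"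

definition Sset :: "real \<Rightarrow> real \<Rightarrow> real \<Rightarrow> real \<Rightarrow> (real \<times> real) set" where
  "Sset R b1 b2 b3 = {(q, n). q = 1 \<or> q = R / (R - 1) \<or> n = 0 \<or>
      (q < 1 \<and> (1 - R) * n \<ge> (1 - R) * lfun R b1 b2 b3 q)}"

(* points of (0,\<infinity>) \<times> [0,\<infinity>) outside \<S> where the formula O/n is well defined
   (all denominators nonzero) *)
definition Gset :: "real \<Rightarrow> real \<Rightarrow> real \<Rightarrow> real \<Rightarrow> (real \<times> real) set" where
  "Gset R b1 b2 b3 = ({0<..} \<times> {0..}) - Sset R b1 b2 b3
      - {(q, n). Dfun R b1 b2 b3 q n = 0 \<or> (1 - R) * q + R = 0}"

definition Ffun :: "real \<Rightarrow> real \<Rightarrow> real \<Rightarrow> real \<Rightarrow> real \<Rightarrow> real \<Rightarrow> real" where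
  "Ffun R b1 b2 b3 q n =
     (if (q, n) \<in> Gset R b1 b2 b3 then Ofun R b1 b2 b3 q n / n
      else Lim (at (q, n) within Gset R b1 b2 b3) (\<lambda>(x, y). Ofun R b1 b2 b3 x y / y))"

end

theory Submission
  imports Defs
begin

text \<open>Away from \<open>q = 1\<close>, \<open>F(q,n) = (1-R)/(R(1-q)) - c(q)/D(q,n)\<close> with \<open>c(q) = 2(1-R)\<^sup>2q/R \<ge> 0\<close>,
and \<open>D\<close> is nonincreasing in \<open>n\<close>: \<open>\<partial>D/\<partial>n = -b\<^sub>1(1 + sgn(1-R) \<phi>/\<surd>(\<phi>\<^sup>2+E\<^sup>2)) \<le> 0\<close>. In the
region \<open>D\<close> does not vanish: squaring \<open>D = 0\<close> shows that its zeros with \<open>q \<noteq> 1\<close> lie on \<open>n = \<ell>(q)\<close>,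
and for \<open>q > 1\<close> only where \<open>(1-R)\<ell>(q) < (1-R)m(q)\<close>. Hence \<open>\<partial>F/\<partial>n = c D\<^sub>n/D\<^sup>2 \<le> 0\<close>.

At \<open>q = 1\<close> both \<open>1 - q\<close> and \<open>D\<close> vanish. On the side \<open>sgn(1-R)\<phi> < 0\<close> rationalising the root gives
\<open>D = (1-q) Dred\<close> with \<open>Dred\<close> continuous, so \<open>F\<close> extends continuously across \<open>q = 1\<close> with
\<open>F(1,n) = (1-R) + R(1-R)\<^sup>2(b\<^sub>2-1)/\<phi>(1,n)\<close>, decreasing in \<open>n\<close> because \<open>\<phi>\<close> increases.

In both cases \<open>F\<close> agrees near \<open>(q,n)\<close> with a continuous closed formula on the good set, which is
dense there, so the limit defining \<open>F\<close> off the good set is that formula as well.\<close>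

lemma phifun_minus_phifun: "phifun R b1 b2 b3 q n - phifun R b1 b2 b3 q n' = b1 * (n - n')"
  unfolding phifun_def by (simp add: algebra_simps)

lemma phifun_1: "b1 \<noteq> 0 \<Longrightarrow> phifun R b1 b2 b3 1 n = b1 * (n - lfun R b1 b2 b3 1)"
  unfolding phifun_def lfun_def mfun_def by (simp add: field_simps)

lemma phifun_lfun:
  assumes "(1 - R) * q + R \<noteq> 0" "b1 \<noteq> 0"
  shows "((1 - R) * q + R) * phifun R b1 b2 b3 q (lfun R b1 b2 b3 q)
     = (1 - R) * (1 - q) * (((1 - R) * q + R)^2 - R^2 * (b2 - 1))"
proof -
  define w where "w = (1 - R) * q + R"
  have "phifun R b1 b2 b3 q (lfun R b1 b2 b3 q) = R * (1 - R) * q^2 + (1 - R) * q * (1 - q)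
     - 2 * R * (1 - R) * q + (2 - b2) * R * (1 - R) + (b2 - 1) * R * (1 - R) * q / w"
    using assms(2) unfolding phifun_def lfun_def mfun_def w_def[symmetric]
    by (simp add: algebra_simps add_divide_distrib diff_divide_distrib)
  then have "w * phifun R b1 b2 b3 q (lfun R b1 b2 b3 q) = w * (R * (1 - R) * q^2 + (1 - R) * q * (1 - q)
     - 2 * R * (1 - R) * q + (2 - b2) * R * (1 - R)) + (b2 - 1) * R * (1 - R) * q"
    using assms(1) unfolding w_def by (simp add: field_simps)
  also have "\<dots> = (1 - R) * (1 - q) * (w^2 - R^2 * (b2 - 1))"
    unfolding w_def by (simp add: algebra_simps power2_eq_square)
  finally show ?thesis unfolding w_def .
qed

lemma lfun_minus_mfun:
  assumes "b1 \<noteq> 0"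
  shows "lfun R b1 b2 b3 q - mfun R b1 b3 q
    = (1 - R) / b1 * q * ((1 - q) + (b2 - 1) * R / ((1 - R) * q + R))"
proof -
  define w where "w = (1 - R) * q + R"
  show ?thesis
    using assms unfolding lfun_def w_def[symmetric]
    by (simp add: divide_simps) (simp add: algebra_simps)
qed

lemma Esq_pos: "0 < R \<Longrightarrow> R \<noteq> 1 \<Longrightarrow> 1 < b2 \<Longrightarrow> q \<noteq> 1 \<Longrightarrow> 0 < Esq R b2 q"
  unfolding Esq_def by simp

lemma eq_sgn_sqrt_imp:
  fixes c p s E :: real
  assumes eq: "c - p = s * sqrt (p^2 + E)" and s: "s * s = 1" and E: "0 < E"
  shows "c^2 - 2 * c * p = E" and "0 < s * (c - p)"
proof -
  have "(c - p)^2 = (s * s) * (sqrt (p^2 + E))^2"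
    unfolding eq by (simp add: power2_eq_square algebra_simps)
  then show "c^2 - 2 * c * p = E"
    using s E by (simp add: add_nonneg_pos power2_eq_square algebra_simps)
  have "s * (c - p) = (s * s) * sqrt (p^2 + E)" unfolding eq by simp
  then show "0 < s * (c - p)" using s E by (simp add: add_nonneg_pos)
qed

lemma Dfun_eq_0_imp_lfun:
  assumes R: "0 < R" "R \<noteq> 1" and b: "0 < b1" "1 < b2" and q: "q \<noteq> 1"
    and D0: "Dfun R b1 b2 b3 q n = 0"
  shows "n = lfun R b1 b2 b3 q \<and> 0 < (1 - q) * ((1 - R) * q + R)"
proof -
  define e w p s where "e = 1 - q" and "w = (1 - R) * q + R" and "p = phifun R b1 b2 b3 q n"
    and "s = sgn (1 - R)"
  have s: "s * s = 1" "s * (1 - R) = \<bar>1 - R\<bar>" unfolding s_def using R by (auto simp: sgn_if)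
  have "2 * (1 - R) * e * w - p = s * sqrt (p^2 + Esq R b2 q)"
    using D0 unfolding Dfun_def e_def w_def p_def s_def by simp
  note root = eq_sgn_sqrt_imp[OF this s(1) Esq_pos[OF R b(2) q]]
  have "4 * (1 - R) * e * ((1 - R) * e * w^2 - w * p - R^2 * (1 - R) * (b2 - 1) * e) = 0"
    using root(1) unfolding Esq_def e_def[symmetric] by (simp add: algebra_simps power2_eq_square)
  moreover have "e \<noteq> 0" "1 - R \<noteq> 0" using R q unfolding e_def by auto
  ultimately have "(1 - R) * e * w^2 - w * p - R^2 * (1 - R) * (b2 - 1) * e = 0"
    by simp
  then have wp: "w * p = (1 - R) * e * (w^2 - R^2 * (b2 - 1))"
    by (simp add: algebra_simps)
  have "(2 * (1 - R) * e * w - p) * w = 2 * (1 - R) * e * w^2 - w * p"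
    by (simp add: algebra_simps power2_eq_square)
  also have "\<dots> = (1 - R) * e * (w^2 + R^2 * (b2 - 1))"
    unfolding wp by (simp add: algebra_simps)
  finally have "s * (2 * (1 - R) * e * w - p) * (e * w) = (s * (1 - R)) * e^2 * (w^2 + R^2 * (b2 - 1))"
    by (simp add: ac_simps power2_eq_square)
  also have "\<dots> > 0"
    unfolding s(2) using R b q unfolding e_def by (intro mult_pos_pos add_nonneg_pos) auto
  finally have ew: "0 < e * w"
    by (rule zero_less_mult_pos[OF _ root(2)])
  then have "w \<noteq> 0" by auto
  then have "w * (p - phifun R b1 b2 b3 q (lfun R b1 b2 b3 q)) = 0"
    using wp phifun_lfun[of R q b1 b2 b3] b unfolding w_def e_def by (simp add: right_diff_distrib)
  then have "n = lfun R b1 b2 b3 q"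
    using \<open>w \<noteq> 0\<close> b unfolding p_def phifun_minus_phifun by simp
  with ew show ?thesis unfolding e_def w_def by simp
qed

lemma lfun_below_mfun:
  assumes R: "0 < R" "R \<noteq> 1" and b: "0 < b1" "1 < b2" and q: "1 < q"
    and w: "0 < (1 - q) * ((1 - R) * q + R)"
  shows "(1 - R) * lfun R b1 b2 b3 q < (1 - R) * mfun R b1 b3 q"
proof -
  have w_neg: "(1 - R) * q + R < 0" using w q by (simp add: zero_less_mult_iff)
  have "(b2 - 1) * R / ((1 - R) * q + R) < 0"
    using w_neg b R by (simp add: divide_pos_neg)
  then have "(1 - R)^2 / b1 * q * ((1 - q) + (b2 - 1) * R / ((1 - R) * q + R)) < 0"
    using R b q by (intro mult_pos_neg) auto
  then have "(1 - R) * (lfun R b1 b2 b3 q - mfun R b1 b3 q) < 0"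
    using b unfolding lfun_minus_mfun[OF b(1)[THEN less_imp_neq, symmetric]]
    by (simp add: power2_eq_square mult.assoc)
  then show ?thesis by (simp add: right_diff_distrib)
qed

lemma Dfun_nonzero:
  assumes R: "0 < R" "R \<noteq> 1" and b: "0 < b1" "1 < b2"
    and reg: "(q < 1 \<and> (1 - R) * n < (1 - R) * lfun R b1 b2 b3 q)
              \<or> (1 < q \<and> (1 - R) * mfun R b1 b3 q < (1 - R) * n)"
  shows "Dfun R b1 b2 b3 q n \<noteq> 0"
proof
  assume "Dfun R b1 b2 b3 q n = 0"
  moreover have "q \<noteq> 1" using reg by auto
  ultimately have n: "n = lfun R b1 b2 b3 q" and w: "0 < (1 - q) * ((1 - R) * q + R)"
    using Dfun_eq_0_imp_lfun R b by blast+
  show False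
  proof (cases "q < 1")
    case True
    then show False using reg n by auto
  next
    case False
    then have "1 < q" using \<open>q \<noteq> 1\<close> by simp
    then show False using reg n lfun_below_mfun[OF R b \<open>1 < q\<close> w, of b3] by auto
  qed
qed

lemma has_real_derivative_Dfun:
  assumes "0 < Esq R b2 q"
  shows "((\<lambda>x. Dfun R b1 b2 b3 q x) has_real_derivative
     - b1 - sgn (1 - R) * (b1 * phifun R b1 b2 b3 q n
        / sqrt ((phifun R b1 b2 b3 q n)^2 + Esq R b2 q))) (at n)"
proof -
  have "0 < (phifun R b1 b2 b3 q n)^2 + Esq R b2 q"
    using assms by (intro add_nonneg_pos) auto
  then show ?thesis
    unfolding Dfun_def phifun_def
    by (auto intro!: derivative_eq_intros simp: field_simps)
qed

lemma sgn_mult_div_sqrt_ge: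
  fixes p E c :: real
  assumes "0 < E"
  shows "- 1 \<le> sgn c * (p / sqrt (p^2 + E))"
proof -
  have "\<bar>p\<bar> \<le> sqrt (p^2 + E)"
    using assms real_sqrt_le_mono[of "p^2" "p^2 + E"] by simp
  moreover have "0 < sqrt (p^2 + E)" using assms by (simp add: add_nonneg_pos)
  ultimately have "\<bar>sgn c * (p / sqrt (p^2 + E))\<bar> \<le> 1"
    by (simp add: abs_mult abs_sgn_eq)
  then show ?thesis by linarith
qed

lemma eventually_nhds_gt_if_isCont:
  fixes g :: "'a::t2_space \<Rightarrow> real"
  shows "isCont g p \<Longrightarrow> c < g p \<Longrightarrow> eventually (\<lambda>z. c < g z) (nhds p)"
  by (simp add: isCont_def tendsto_at_iff_tendsto_nhds order_tendstoD(1))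

lemma eventually_nhds_lt_if_isCont:
  fixes g :: "'a::t2_space \<Rightarrow> real"
  shows "isCont g p \<Longrightarrow> g p < c \<Longrightarrow> eventually (\<lambda>z. g z < c) (nhds p)"
  by (simp add: isCont_def tendsto_at_iff_tendsto_nhds order_tendstoD(2))

lemma eventually_nhds_ne_if_isCont:
  fixes g :: "'a::t2_space \<Rightarrow> real"
  shows "isCont g p \<Longrightarrow> g p \<noteq> c \<Longrightarrow> eventually (\<lambda>z. g z \<noteq> c) (nhds p)"
  by (simp add: isCont_def tendsto_at_iff_tendsto_nhds tendsto_imp_eventually_ne)

lemma Lim_within_eq_continuous:
  fixes f g :: "'a::t2_space \<Rightarrow> 'b::t2_space"
  assumes U: "open U" "p \<in> U" and cont: "continuous_on U f"
    and agree: "\<And>z. z \<in> U \<Longrightarrow> z \<in> S \<Longrightarrow> g z = f z" and lp: "p islimpt S"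
  shows "Lim (at p within S) g = f p"
proof (rule tendsto_Lim)
  show "\<not> trivial_limit (at p within S)" using lp trivial_limit_within by blast
  have "isCont f p" using continuous_on_eq_continuous_at[OF U(1)] cont U(2) by blast
  then have "(f \<longlongrightarrow> f p) (at p within S)" unfolding isCont_def by (rule Lim_at_imp_Lim_at_within)
  moreover have "eventually (\<lambda>z. f z = g z) (at p within S)"
    unfolding eventually_at_topological using U agree by (intro exI[of _ U]) auto
  ultimately show "(g \<longlongrightarrow> f p) (at p within S)"
    by (rule Lim_transform_eventually)
qed

lemma islimpt_if_ball_off_lines:
  fixes S :: "(real \<times> real) set"
  assumes "0 < \<delta>" "0 \<le> snd z"
    and "\<And>u v. (u, v) \<in> ball z \<delta> \<Longrightarrow> u \<noteq> a \<Longrightarrow> u \<noteq> c \<Longrightarrow> 0 < v \<Longrightarrow> (u, v) \<in> S"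
  shows "z islimpt S"
proof (unfold islimpt_approachable, intro allI impI)
  fix e :: real assume e: "e > 0"
  obtain u v where z: "z = (u, v)" by (cases z)
  define t0 where "t0 = min e \<delta> / 2"
  have t0: "0 < t0" "t0 < e" "t0 < \<delta>" using e assms(1) by (auto simp: t0_def)
  \<comment> \<open>of three distinct shifts, at most two hit the lines \<open>u = a\<close>, \<open>u = c\<close>\<close>
  obtain t where t: "0 < t" "t \<le> t0 / 2" "u + t \<noteq> a" "u + t \<noteq> c"
  proof -
    consider "u + t0/2 \<noteq> a \<and> u + t0/2 \<noteq> c" | "u + t0/3 \<noteq> a \<and> u + t0/3 \<noteq> c"
      | "u + t0/4 \<noteq> a \<and> u + t0/4 \<noteq> c" using t0 by fastforce
    then show ?thesis
    proof cases
      case 1 then show ?thesis using that[of "t0/2"] t0 by simp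
    next
      case 2 then show ?thesis using that[of "t0/3"] t0 by simp
    next
      case 3 then show ?thesis using that[of "t0/4"] t0 by simp
    qed
  qed
  have d: "dist (u + t, v + t) (u, v) < 2 * t"
  proof -
    have "dist (u + t, v + t) (u, v) = sqrt (2 * t^2)" by (simp add: dist_Pair_Pair dist_real_def)
    also have "\<dots> < sqrt ((2 * t)^2)" using t by (simp add: power2_eq_square)
    also have "\<dots> = 2 * t" using t by (simp only: real_sqrt_abs)
    finally show ?thesis .
  qed
  have "(u + t, v + t) \<in> S"
    using assms(3)[of "u + t" "v + t"] d t t0 assms(2) z by (simp add: dist_commute)
  then show "\<exists>x'\<in>S. x' \<noteq> z \<and> dist x' z < e" using d t t0 z by (intro bexI[of _ "(u + t, v + t)"]) auto
qed

lemma Ffun_if_mem: "(q, n) \<in> Gset R b1 b2 b3 \<Longrightarrow> Ffun R b1 b2 b3 q n = Ofun R b1 b2 b3 q n / n"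
  unfolding Ffun_def by (rule if_P)

lemma Ffun_if_not_mem: "(q, n) \<notin> Gset R b1 b2 b3 \<Longrightarrow>
    Ffun R b1 b2 b3 q n = Lim (at (q, n) within Gset R b1 b2 b3) (\<lambda>(x, y). Ofun R b1 b2 b3 x y / y)"
  unfolding Ffun_def by (rule if_not_P)

lemma mem_GsetI:
  assumes "R \<noteq> 1" "0 < u" "0 < v" "u \<noteq> 1" "u \<noteq> R / (R - 1)" "Dfun R b1 b2 b3 u v \<noteq> 0"
    and "u < 1 \<Longrightarrow> (1 - R) * v < (1 - R) * lfun R b1 b2 b3 u"
  shows "(u, v) \<in> Gset R b1 b2 b3"
proof -
  have "(1 - R) * u + R \<noteq> 0"
  proof
    assume "(1 - R) * u + R = 0"
    then have "u = R / (R - 1)" using assms(1) by (simp add: field_simps)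
    then show False using assms(5) by simp
  qed
  then show ?thesis using assms unfolding Gset_def Sset_def by auto
qed

lemma has_real_derivative_Ffun_if_local_formula:
  fixes f :: "real \<times> real \<Rightarrow> real"
  assumes U: "open U" "(q, n) \<in> U" and n: "0 \<le> n" and cont: "continuous_on U f"
    and agree: "\<And>u v. (u, v) \<in> U \<Longrightarrow> (u, v) \<in> Gset R b1 b2 b3 \<Longrightarrow> Ofun R b1 b2 b3 u v / v = f (u, v)"
    and dense: "\<And>u v. (u, v) \<in> U \<Longrightarrow> u \<noteq> 1 \<Longrightarrow> u \<noteq> R / (R - 1) \<Longrightarrow> 0 < v
                  \<Longrightarrow> (u, v) \<in> Gset R b1 b2 b3"
    and deriv: "((\<lambda>x. f (q, x)) has_real_derivative D) (at n)"
  shows "((\<lambda>x. Ffun R b1 b2 b3 q x) has_real_derivative D) (at n within {0..})"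
proof -
  have Ffun_eq: "Ffun R b1 b2 b3 q x = f (q, x)" if x: "(q, x) \<in> U" "0 \<le> x" for x
  proof (cases "(q, x) \<in> Gset R b1 b2 b3")
    case True
    then show ?thesis using agree[OF x(1) True] by (simp add: Ffun_if_mem)
  next
    case False
    obtain \<delta> where \<delta>: "0 < \<delta>" "ball (q, x) \<delta> \<subseteq> U"
      using open_contains_ball[THEN iffD1, OF U(1)] x(1) by blast
    have lp: "(q, x) islimpt Gset R b1 b2 b3"
    proof (rule islimpt_if_ball_off_lines[OF \<delta>(1)])
      fix u v assume "(u, v) \<in> ball (q, x) \<delta>" "u \<noteq> 1" "u \<noteq> R / (R - 1)" "0 < v"
      then show "(u, v) \<in> Gset R b1 b2 b3" using \<delta>(2) dense by blast
    qed (use x in simp)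
    have "Lim (at (q, x) within Gset R b1 b2 b3) (\<lambda>(u, v). Ofun R b1 b2 b3 u v / v) = f (q, x)"
      by (rule Lim_within_eq_continuous[OF U(1) x(1) cont _ lp]) (clarsimp simp: agree)
    then show ?thesis using Ffun_if_not_mem[OF False] by simp
  qed
  obtain d where d: "0 < d" "ball (q, n) d \<subseteq> U"
    using open_contains_ball[THEN iffD1, OF U(1)] U(2) by blast
  show ?thesis
  proof (rule has_field_derivative_transform_within[OF has_field_derivative_at_within[OF deriv] d(1)])
    fix x :: real assume x: "x \<in> {0..}" "dist x n < d"
    then have "(q, x) \<in> U" using d(2) by (auto simp: dist_Pair_Pair dist_commute)
    then show "f (q, x) = Ffun R b1 b2 b3 q x" using Ffun_eq x by simp
  qed (use n in simp)
qed

lemma isCont_phifun: "isCont (\<lambda>z. phifun R b1 b2 b3 (fst z) (snd z)) p"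
  unfolding phifun_def by (intro continuous_intros)

lemma isCont_Dfun: "isCont (\<lambda>z. Dfun R b1 b2 b3 (fst z) (snd z)) p"
  unfolding Dfun_def phifun_def Esq_def by (intro continuous_intros)

lemma isCont_lfun:
  "(1 - R) * fst p + R \<noteq> 0 \<Longrightarrow> b1 \<noteq> 0 \<Longrightarrow> isCont (\<lambda>z. lfun R b1 b2 b3 (fst z)) p"
  unfolding lfun_def mfun_def by (intro continuous_intros) auto

lemma Ofun_div_eq:
  "R \<noteq> 0 \<Longrightarrow> u \<noteq> 1 \<Longrightarrow> v \<noteq> 0 \<Longrightarrow> Ofun R b1 b2 b3 u v / v
     = (1 - R) / (R * (1 - u)) - 2 * (1 - R)^2 * u / R / Dfun R b1 b2 b3 u v"
  unfolding Ofun_def by (simp add: field_simps)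

lemma Dfun_has_nonpos_derivative:
  assumes R: "0 < R" "R \<noteq> 1" and b: "0 < b1" "1 < b2" and q: "q \<noteq> 1"
  obtains D' where "((\<lambda>x. Dfun R b1 b2 b3 q x) has_real_derivative D') (at n)" "D' \<le> 0"
proof
  have E: "0 < Esq R b2 q" using R b(2) q by (rule Esq_pos)
  let ?r = "phifun R b1 b2 b3 q n / sqrt ((phifun R b1 b2 b3 q n)^2 + Esq R b2 q)"
  show "((\<lambda>x. Dfun R b1 b2 b3 q x) has_real_derivative - b1 * (1 + sgn (1 - R) * ?r)) (at n)"
    using has_real_derivative_Dfun[OF E, of b1 b3 n] by (simp add: algebra_simps)
  show "- b1 * (1 + sgn (1 - R) * ?r) \<le> 0"
    using sgn_mult_div_sqrt_ge[OF E, of "1 - R" "phifun R b1 b2 b3 q n"] b(1)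
    by (intro mult_nonpos_nonneg) auto
qed

lemma nhds_off_1:
  assumes R: "0 < R" "R \<noteq> 1" and b: "0 < b1" "1 < b2" and q: "0 < q"
    and reg: "(q < 1 \<and> (1 - R) * n < (1 - R) * lfun R b1 b2 b3 q)
              \<or> (1 < q \<and> (1 - R) * mfun R b1 b3 q < (1 - R) * n)"
  obtains U where "open U" "(q, n) \<in> U"
    and "\<And>u v. (u, v) \<in> U \<Longrightarrow> 0 < u \<and> Dfun R b1 b2 b3 u v \<noteq> 0 \<and> 0 < (1 - u) * (1 - q)
           \<and> (q < 1 \<longrightarrow> 0 < (1 - R) * lfun R b1 b2 b3 u - (1 - R) * v)"
proof -
  have "\<forall>\<^sub>F z in nhds (q, n). 0 < fst z \<and> Dfun R b1 b2 b3 (fst z) (snd z) \<noteq> 0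
    \<and> 0 < (1 - fst z) * (1 - q) \<and> (q < 1 \<longrightarrow> 0 < (1 - R) * lfun R b1 b2 b3 (fst z) - (1 - R) * snd z)"
  proof (intro eventually_conj)
    show "\<forall>\<^sub>F z in nhds (q, n). 0 < fst z"
      using q by (intro eventually_nhds_gt_if_isCont continuous_intros) auto
    show "\<forall>\<^sub>F z in nhds (q, n). Dfun R b1 b2 b3 (fst z) (snd z) \<noteq> 0"
      using Dfun_nonzero[OF R b reg] by (intro eventually_nhds_ne_if_isCont isCont_Dfun) auto
    show "\<forall>\<^sub>F z in nhds (q, n). 0 < (1 - fst z) * (1 - q)"
      using reg by (intro eventually_nhds_gt_if_isCont continuous_intros) (auto simp: zero_less_mult_iff)
    show "\<forall>\<^sub>F z in nhds (q, n). q < 1 \<longrightarrow> 0 < (1 - R) * lfun R b1 b2 b3 (fst z) - (1 - R) * snd z"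
    proof (cases "q < 1")
      case True
      have "(1 - R) * q + R = R * (1 - q) + q" by (simp add: algebra_simps)
      moreover have "0 \<le> R * (1 - q)" using True R by simp
      ultimately have "0 < (1 - R) * q + R" using q by linarith
      then have "\<forall>\<^sub>F z in nhds (q, n). 0 < (1 - R) * lfun R b1 b2 b3 (fst z) - (1 - R) * snd z"
        using True reg b by (intro eventually_nhds_gt_if_isCont continuous_intros isCont_lfun) auto
      then show ?thesis by (rule eventually_mono) simp
    qed simp
  qed
  then show ?thesis using that unfolding eventually_nhds by fastforce
qed

lemma Ffun_derivative_nonpos_off_1:
  assumes R: "0 < R" "R \<noteq> 1" and b: "0 < b1" "1 < b2" and n: "0 \<le> n" and q: "0 < q"
    and reg: "(q < 1 \<and> (1 - R) * n < (1 - R) * lfun R b1 b2 b3 q)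
              \<or> (1 < q \<and> (1 - R) * mfun R b1 b3 q < (1 - R) * n)"
  shows "\<exists>D. ((\<lambda>x. Ffun R b1 b2 b3 q x) has_real_derivative D) (at n within {0..}) \<and> D \<le> 0"
proof -
  obtain U where U: "open U" "(q, n) \<in> U"
    and P: "\<And>u v. (u, v) \<in> U \<Longrightarrow> 0 < u \<and> Dfun R b1 b2 b3 u v \<noteq> 0 \<and> 0 < (1 - u) * (1 - q)
           \<and> (q < 1 \<longrightarrow> 0 < (1 - R) * lfun R b1 b2 b3 u - (1 - R) * v)"
    using nhds_off_1[OF R b q reg] by blast
  have "q \<noteq> 1" using reg by auto
  then obtain D' where D': "((\<lambda>x. Dfun R b1 b2 b3 q x) has_real_derivative D') (at n)" "D' \<le> 0"
    using Dfun_has_nonpos_derivative[OF R b] by blast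
  define f where "f z = (1 - R) / (R * (1 - fst z)) - 2 * (1 - R)^2 * fst z / R
    / Dfun R b1 b2 b3 (fst z) (snd z)" for z
  let ?D = "2 * (1 - R)^2 * q / R * D' / (Dfun R b1 b2 b3 q n)^2"
  have "((\<lambda>x. Ffun R b1 b2 b3 q x) has_real_derivative ?D) (at n within {0..})"
  proof (rule has_real_derivative_Ffun_if_local_formula[OF U n])
    show "continuous_on U f"
    proof (intro continuous_at_imp_continuous_on ballI)
      fix z assume "z \<in> U"
      then have "fst z \<noteq> 1" "Dfun R b1 b2 b3 (fst z) (snd z) \<noteq> 0" using P[of "fst z" "snd z"] by auto
      then show "isCont f z" unfolding f_def using R by (intro continuous_intros isCont_Dfun) auto
    qed
    show "Ofun R b1 b2 b3 u v / v = f (u, v)" if "(u, v) \<in> Gset R b1 b2 b3" for u v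
      using that R unfolding f_def Gset_def Sset_def by (auto simp: Ofun_div_eq)
    show "(u, v) \<in> Gset R b1 b2 b3"
      if "(u, v) \<in> U" "u \<noteq> 1" "u \<noteq> R / (R - 1)" "0 < v" for u v
      using that P[OF that(1)] R by (intro mem_GsetI) (auto simp: zero_less_mult_iff)
    show "((\<lambda>x. f (q, x)) has_real_derivative ?D) (at n)"
      using D'(1) P[OF U(2)] R unfolding f_def fst_conv snd_conv
      by (auto intro!: derivative_eq_intros simp: field_simps power2_eq_square)
  qed
  moreover have "?D \<le> 0"
    using D'(2) R q by (intro divide_nonpos_nonneg mult_nonneg_nonpos) auto
  ultimately show ?thesis by blast
qed

lemma minus_sub_sgn_sqrt:
  fixes s p E :: real
  assumes sp: "s * p < 0" and s: "s = 1 \<or> s = -1" and E: "0 \<le> E"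
  shows "- p - s * sqrt (p^2 + E) = - s * E / (sqrt (p^2 + E) + \<bar>p\<bar>)"
proof -
  define r where "r = sqrt (p^2 + E)"
  have "\<bar>p\<bar> \<le> r" unfolding r_def using E real_sqrt_le_mono[of "p^2" "p^2 + E"] by simp
  moreover have "0 < \<bar>p\<bar>" using sp by auto
  ultimately have pos: "0 < r + \<bar>p\<bar>" by linarith
  have "(r - \<bar>p\<bar>) * (r + \<bar>p\<bar>) = E"
    unfolding r_def using E by (simp add: algebra_simps power2_eq_square add_nonneg_nonneg)
  then have "r - \<bar>p\<bar> = E / (r + \<bar>p\<bar>)" using pos by (simp add: field_simps)
  moreover have "- p - s * r = - s * (r - \<bar>p\<bar>)" using s sp by (auto simp: algebra_simps)
  ultimately show ?thesis unfolding r_def by simp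
qed

text \<open>Where \<open>sgn(1-R) \<phi> < 0\<close>, \<open>-\<phi> - sgn(1-R) \<surd>(\<phi>\<^sup>2+E\<^sup>2) = -sgn(1-R) E\<^sup>2/(\<surd>(\<phi>\<^sup>2+E\<^sup>2) + \<bar>\<phi>\<bar>)\<close> and
\<open>E\<^sup>2\<close> carries the factor \<open>(1-q)\<^sup>2\<close>, so \<open>D = (1-q) Dred\<close> (\<open>Dfun_eq_Dred\<close>); \<open>Fext\<close> is \<open>O/n\<close>
rewritten with \<open>Dred\<close>, which stays meaningful at \<open>q = 1\<close>.\<close>

definition Kfun :: "real \<Rightarrow> real \<Rightarrow> real \<Rightarrow> real \<Rightarrow> real \<Rightarrow> real \<Rightarrow> real" where
  "Kfun R b1 b2 b3 q n = 4 * R^2 * (1 - R)^2 * (b2 - 1)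
     / (sqrt ((phifun R b1 b2 b3 q n)^2 + Esq R b2 q) + \<bar>phifun R b1 b2 b3 q n\<bar>)"

definition Dred :: "real \<Rightarrow> real \<Rightarrow> real \<Rightarrow> real \<Rightarrow> real \<Rightarrow> real \<Rightarrow> real" where
  "Dred R b1 b2 b3 q n = 2 * (1 - R) * ((1 - R) * q + R) - sgn (1 - R) * Kfun R b1 b2 b3 q n * (1 - q)"

definition Fext :: "real \<Rightarrow> real \<Rightarrow> real \<Rightarrow> real \<Rightarrow> real \<Rightarrow> real \<Rightarrow> real" where
  "Fext R b1 b2 b3 q n = (1 - R) * (2 * (1 - R) * R - sgn (1 - R) * Kfun R b1 b2 b3 q n)
     / (R * Dred R b1 b2 b3 q n)"

lemma Dfun_eq_Dred:
  assumes "R \<noteq> 1" "1 \<le> b2" and sp: "sgn (1 - R) * phifun R b1 b2 b3 q n < 0"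
  shows "Dfun R b1 b2 b3 q n = (1 - q) * Dred R b1 b2 b3 q n"
proof -
  have s: "sgn (1 - R) = 1 \<or> sgn (1 - R) = -1" using assms(1) by (auto simp: sgn_if)
  have E: "0 \<le> Esq R b2 q" using assms(2) by (simp add: Esq_def)
  have "- phifun R b1 b2 b3 q n - sgn (1 - R) * sqrt ((phifun R b1 b2 b3 q n)^2 + Esq R b2 q)
      = - sgn (1 - R) * Esq R b2 q
        / (sqrt ((phifun R b1 b2 b3 q n)^2 + Esq R b2 q) + \<bar>phifun R b1 b2 b3 q n\<bar>)"
    by (rule minus_sub_sgn_sqrt[OF sp s E])
  also have "\<dots> = - sgn (1 - R) * Kfun R b1 b2 b3 q n * (1 - q)^2"
    unfolding Kfun_def Esq_def by (simp add: ac_simps)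
  finally show ?thesis
    unfolding Dfun_def Dred_def by (simp add: algebra_simps power2_eq_square)
qed

lemma Ofun_div_eq_Fext:
  assumes R: "R \<noteq> 0" "R \<noteq> 1" and b2: "1 \<le> b2" and u: "u \<noteq> 1" and v: "v \<noteq> 0"
    and s: "sgn (1 - R) * phifun R b1 b2 b3 u v < 0" and D: "Dred R b1 b2 b3 u v \<noteq> 0"
  shows "Ofun R b1 b2 b3 u v / v = Fext R b1 b2 b3 u v"
proof -
  define G K where "G = Dred R b1 b2 b3 u v" and "K = Kfun R b1 b2 b3 u v"
  have G: "G \<noteq> 0" unfolding G_def by (rule D)
  have "Ofun R b1 b2 b3 u v / v = (1 - R) / (R * (1 - u)) - 2 * (1 - R)^2 * u / R / ((1 - u) * G)"
    unfolding G_def using Ofun_div_eq[OF R(1) u v] Dfun_eq_Dred[OF R(2) b2 s] by simp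
  also have "\<dots> = ((1 - R) * G - 2 * (1 - R)^2 * u) / (R * (1 - u) * G)"
    using R u G by (simp add: divide_simps)
  also have "(1 - R) * G - 2 * (1 - R)^2 * u = (1 - u) * ((1 - R) * (2 * (1 - R) * R - sgn (1 - R) * K))"
    unfolding G_def K_def Dred_def by (simp add: algebra_simps power2_eq_square)
  also have "\<dots> / (R * (1 - u) * G) = Fext R b1 b2 b3 u v"
    using u unfolding Fext_def G_def K_def by simp
  finally show ?thesis .
qed

lemma Fext_at_1:
  assumes R: "0 < R" "R \<noteq> 1" and sp: "sgn (1 - R) * phifun R b1 b2 b3 1 n < 0"
  shows "Fext R b1 b2 b3 1 n = (1 - R) + R * (1 - R)^2 * (b2 - 1) / phifun R b1 b2 b3 1 n"
proof -
  define p where "p = phifun R b1 b2 b3 1 n"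
  have K: "Kfun R b1 b2 b3 1 n = 2 * R^2 * (1 - R)^2 * (b2 - 1) / \<bar>p\<bar>"
    unfolding Kfun_def Esq_def p_def by simp
  have "p \<noteq> 0" using sp unfolding p_def by auto
  have s: "- sgn (1 - R) / \<bar>p\<bar> = 1 / p"
    using sp unfolding p_def by (cases "R < 1") (auto simp: sgn_if)
  have "Fext R b1 b2 b3 1 n = (1 - R) - sgn (1 - R) * Kfun R b1 b2 b3 1 n / (2 * R)"
    using R unfolding Fext_def Dred_def by (simp add: field_simps)
  also have "\<dots> = (1 - R) + R * (1 - R)^2 * (b2 - 1) * (- sgn (1 - R) / \<bar>p\<bar>)"
    using R \<open>p \<noteq> 0\<close> unfolding K by (simp add: field_simps power2_eq_square)
  also have "\<dots> = (1 - R) + R * (1 - R)^2 * (b2 - 1) / p"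
    unfolding s by simp
  finally show ?thesis unfolding p_def .
qed

lemma isCont_Kfun:
  assumes "1 \<le> b2" "phifun R b1 b2 b3 (fst p) (snd p) \<noteq> 0"
  shows "isCont (\<lambda>z. Kfun R b1 b2 b3 (fst z) (snd z)) p"
proof -
  have "0 \<le> sqrt ((phifun R b1 b2 b3 (fst p) (snd p))^2 + Esq R b2 (fst p))"
    using assms(1) by (simp add: Esq_def)
  then have "sqrt ((phifun R b1 b2 b3 (fst p) (snd p))^2 + Esq R b2 (fst p))
      + \<bar>phifun R b1 b2 b3 (fst p) (snd p)\<bar> \<noteq> 0"
    using assms(2) by linarith
  then show ?thesis
    unfolding Kfun_def by (intro continuous_intros isCont_phifun) (simp_all add: Esq_def)
qed

lemma isCont_Dred:
  "1 \<le> b2 \<Longrightarrow> phifun R b1 b2 b3 (fst p) (snd p) \<noteq> 0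
    \<Longrightarrow> isCont (\<lambda>z. Dred R b1 b2 b3 (fst z) (snd z)) p"
  unfolding Dred_def by (intro continuous_intros isCont_Kfun)

lemma isCont_Fext:
  "R \<noteq> 0 \<Longrightarrow> 1 \<le> b2 \<Longrightarrow> phifun R b1 b2 b3 (fst p) (snd p) \<noteq> 0
    \<Longrightarrow> Dred R b1 b2 b3 (fst p) (snd p) \<noteq> 0 \<Longrightarrow> isCont (\<lambda>z. Fext R b1 b2 b3 (fst z) (snd z)) p"
  unfolding Fext_def by (intro continuous_intros isCont_Kfun isCont_Dred) auto

lemma has_real_derivative_Fext_at_1:
  assumes R: "0 < R" "R \<noteq> 1" and sp: "sgn (1 - R) * phifun R b1 b2 b3 1 n < 0"
  shows "((\<lambda>x. Fext R b1 b2 b3 1 x) has_real_derivative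
      - R * (1 - R)^2 * (b2 - 1) * b1 / (phifun R b1 b2 b3 1 n)^2) (at n)"
proof (rule has_field_derivative_transform_within_open)
  let ?S = "{x. sgn (1 - R) * phifun R b1 b2 b3 1 x < 0}"
  show "open ?S"
    unfolding phifun_def by (intro open_Collect_less continuous_intros)
  show "n \<in> ?S" using sp by simp
  show "(1 - R) + R * (1 - R)^2 * (b2 - 1) / phifun R b1 b2 b3 1 x = Fext R b1 b2 b3 1 x"
    if "x \<in> ?S" for x
    using Fext_at_1[OF R, of b1 b2 b3 x] that by simp
  have "phifun R b1 b2 b3 1 n \<noteq> 0" using sp by auto
  then show "((\<lambda>x. (1 - R) + R * (1 - R)^2 * (b2 - 1) / phifun R b1 b2 b3 1 x) has_real_derivative
      - R * (1 - R)^2 * (b2 - 1) * b1 / (phifun R b1 b2 b3 1 n)^2) (at n)"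
    unfolding phifun_def by (auto intro!: derivative_eq_intros simp: power2_eq_square)
qed

lemma sgn_phifun_at_1:
  assumes "0 < R" "R \<noteq> 1" "0 < b1" "(1 - R) * n < (1 - R) * lfun R b1 b2 b3 1"
  shows "sgn (1 - R) * phifun R b1 b2 b3 1 n < 0"
  using assms phifun_1[of b1 R b2 b3 n]
  by (cases "R < 1") (auto simp: mult_less_cancel_left_neg mult_pos_neg)

lemma nhds_at_1:
  assumes R: "0 < R" "R \<noteq> 1" and b: "0 < b1" "1 < b2"
    and reg: "(1 - R) * n < (1 - R) * lfun R b1 b2 b3 1"
  obtains U where "open U" "(1, n) \<in> U"
    and "\<And>u v. (u, v) \<in> U \<Longrightarrow> 0 < u \<and> sgn (1 - R) * phifun R b1 b2 b3 u v < 0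
           \<and> Dred R b1 b2 b3 u v \<noteq> 0 \<and> 0 < (1 - R) * lfun R b1 b2 b3 u - (1 - R) * v"
proof -
  have sp: "sgn (1 - R) * phifun R b1 b2 b3 1 n < 0"
    using R b(1) reg by (rule sgn_phifun_at_1)
  have "\<forall>\<^sub>F z in nhds (1::real, n). 0 < fst z \<and> sgn (1 - R) * phifun R b1 b2 b3 (fst z) (snd z) < 0
    \<and> Dred R b1 b2 b3 (fst z) (snd z) \<noteq> 0 \<and> 0 < (1 - R) * lfun R b1 b2 b3 (fst z) - (1 - R) * snd z"
  proof (intro eventually_conj)
    show "\<forall>\<^sub>F z in nhds (1::real, n). 0 < fst z"
      by (intro eventually_nhds_gt_if_isCont continuous_intros) auto
    show "\<forall>\<^sub>F z in nhds (1::real, n). sgn (1 - R) * phifun R b1 b2 b3 (fst z) (snd z) < 0"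
      using sp by (intro eventually_nhds_lt_if_isCont continuous_intros isCont_phifun) auto
    show "\<forall>\<^sub>F z in nhds (1::real, n). Dred R b1 b2 b3 (fst z) (snd z) \<noteq> 0"
      using sp b R by (intro eventually_nhds_ne_if_isCont isCont_Dred) (auto simp: Dred_def)
    show "\<forall>\<^sub>F z in nhds (1::real, n). 0 < (1 - R) * lfun R b1 b2 b3 (fst z) - (1 - R) * snd z"
      using reg b by (intro eventually_nhds_gt_if_isCont continuous_intros isCont_lfun) auto
  qed
  then show ?thesis using that unfolding eventually_nhds by fastforce
qed

lemma Ffun_derivative_nonpos_at_1:
  assumes R: "0 < R" "R \<noteq> 1" and b: "0 < b1" "1 < b2" and n: "0 \<le> n"
    and reg: "(1 - R) * n < (1 - R) * lfun R b1 b2 b3 1"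
  shows "\<exists>D. ((\<lambda>x. Ffun R b1 b2 b3 1 x) has_real_derivative D) (at n within {0..}) \<and> D \<le> 0"
proof -
  obtain U where U: "open U" "(1, n) \<in> U"
    and P: "\<And>u v. (u, v) \<in> U \<Longrightarrow> 0 < u \<and> sgn (1 - R) * phifun R b1 b2 b3 u v < 0
           \<and> Dred R b1 b2 b3 u v \<noteq> 0 \<and> 0 < (1 - R) * lfun R b1 b2 b3 u - (1 - R) * v"
    using nhds_at_1[OF R b reg] by blast
  let ?D = "- R * (1 - R)^2 * (b2 - 1) * b1 / (phifun R b1 b2 b3 1 n)^2"
  have "((\<lambda>x. Ffun R b1 b2 b3 1 x) has_real_derivative ?D) (at n within {0..})"
  proof (rule has_real_derivative_Ffun_if_local_formula[OF U n])
    show "continuous_on U (\<lambda>z. Fext R b1 b2 b3 (fst z) (snd z))"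
    proof (intro continuous_at_imp_continuous_on ballI)
      fix z assume "z \<in> U"
      then show "isCont (\<lambda>z. Fext R b1 b2 b3 (fst z) (snd z)) z"
        using P[of "fst z" "snd z"] R b by (intro isCont_Fext) auto
    qed
    show "Ofun R b1 b2 b3 u v / v = Fext R b1 b2 b3 (fst (u, v)) (snd (u, v))"
      if "(u, v) \<in> U" "(u, v) \<in> Gset R b1 b2 b3" for u v
    proof -
      have "u \<noteq> 1" "v \<noteq> 0" using that(2) by (auto simp: Gset_def Sset_def)
      then show ?thesis
        using P[OF that(1)] R b by (auto intro: Ofun_div_eq_Fext)
    qed
    show "(u, v) \<in> Gset R b1 b2 b3"
      if "(u, v) \<in> U" "u \<noteq> 1" "u \<noteq> R / (R - 1)" "0 < v" for u v
    proof -
      have "Dfun R b1 b2 b3 u v = (1 - u) * Dred R b1 b2 b3 u v"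
        using P[OF that(1)] R b by (auto intro: Dfun_eq_Dred)
      then show ?thesis
        using P[OF that(1)] that R by (intro mem_GsetI) auto
    qed
    show "((\<lambda>x. Fext R b1 b2 b3 (fst (1, x)) (snd (1, x))) has_real_derivative ?D) (at n)"
      using has_real_derivative_Fext_at_1[OF R sgn_phifun_at_1[OF R b(1) reg]] by simp
  qed
  moreover have "?D \<le> 0"
    using R b by (intro divide_nonpos_nonneg mult_nonpos_nonneg) auto
  ultimately show ?thesis by blast
qed

theorem lemmaE3:
  fixes R b1 b2 b3 q n :: real
  assumes "0 < R" and "R \<noteq> 1" and "0 < b1" and "1 < b2" and "0 < b3"
    and "0 \<le> n"
    and "(0 < q \<and> q \<le> 1 \<and> (1 - R) * mfun R b1 b3 q < (1 - R) * n
            \<and> (1 - R) * n < (1 - R) * lfun R b1 b2 b3 q)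
         \<or> (1 < q \<and> (1 - R) * mfun R b1 b3 q < (1 - R) * n)"
  shows "\<exists>D. ((\<lambda>x. Ffun R b1 b2 b3 q x) has_real_derivative D) (at n within {0..}) \<and> D \<le> 0"
proof (cases "q = 1")
  case True
  then show ?thesis
    using Ffun_derivative_nonpos_at_1[OF assms(1-4,6)] assms(7) by auto
next
  case False
  have "0 < q" using assms(7) by auto
  moreover have "(q < 1 \<and> (1 - R) * n < (1 - R) * lfun R b1 b2 b3 q)
      \<or> (1 < q \<and> (1 - R) * mfun R b1 b3 q < (1 - R) * n)"
    using assms(7) False by auto
  ultimately show ?thesis
    by (rule Ffun_derivative_nonpos_off_1[OF assms(1-4,6)])
qed

end
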